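(* Let $\mathcal N':=\mathbb N\cup\{-1\}$ (with $\mathbb N=\{0,1,2,\dots\}$) and let $H=(\mathcal N',\mathcal N',p_1,p_2)$ be the two-player game with, for $k,\ell\ge 0$: $p_1(k,\ell)=\ell+1$ if $k=\ell+1$ and $0$ otherwise; $p_2(k,\ell)=k$ if $k=\ell$ and $0$ otherwise; and, for $k,\ell\ge -1$ and $k_0,\ell_0\ge 0$: $p_1(-1,\ell)=\ell+1$, $p_1(k_0,-1)=k_0$, $p_2(k,-1)=k$, $p_2(-1,\ell_0)=\ell_0$. With the pure belief structure, $\overline{GR}^{\omega}=(\{-1\},\{-1\})$ and $\overline{GR}^{\omega+1}=(\emptyset,\emptyset)$, so the closure ordinal of $\overline{GR}$ is $\omega+1$ and its outcome is $(\emptyset,\emptyset)$. Moreover $\overline{LR}^{\omega}=(\{-1\},\{-1\})$ and this is a fixpoint of $\overline{LR}$, so the outcome of $\overline{LR}$ is $(\{-1\},\{-1\})$.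
   Context: Restrictions of $H$ are pairs $(S_1,S_2)$ with $S_i\subseteq\mathcal N'$, ordered componentwise. Pure belief structure: the beliefs of player $i$ in a restriction $G=(S_1,S_2)$ are the strategies of the opponent in $G$, i.e. $S_{-i}$, and the expected payoff is the payoff. For $G=(S_1,S_2)$ and an opponent strategy $\mu_i$, $s_i\in BR_G(\mu_i)$ iff $p_i(s_i,\mu_i)\ge p_i(s_i',\mu_i)$ for all $s_i'\in S_i$. $GR(G)_i:=\{s_i\in\mathcal N'\mid\exists\mu_i\in S_{-i}: s_i\in BR_H(\mu_i)\}$; $LR(G)_i:=\{s_i\in\mathcal N'\mid\exists\mu_i\in S_{-i}: s_i\in BR_G(\mu_i)\}$; $\overline{T}(G):=T(G)\cap G$. Iterations: $T^0:=H$, $T^{\alpha+1}:=T(T^\alpha)$, $T^\beta:=\bigcap_{\alpha<\beta}T^\alpha$ for limit $\beta$; the closure ordinal is the least $\alpha$ with $T^{\alpha+1}=T^\alpha$ and the outcome is the corresponding iterate. *)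

theory Defs
  imports Main
begin

definition Np :: "int set" where "Np = {k. k \<ge> -1}"

text \<open>Payoffs; arguments are (strategy of player 1, strategy of player 2).\<close>
definition p1 :: "int \<Rightarrow> int \<Rightarrow> int" where
  "p1 k l = (if k = -1 then l + 1 else if l = -1 then k else if k = l + 1 then l + 1 else 0)"

definition p2 :: "int \<Rightarrow> int \<Rightarrow> int" where
  "p2 k l = (if l = -1 then k else if k = -1 then l else if k = l then k else 0)"

type_synonym restr = "int set \<times> int set"

definition H :: restr where "H = (Np, Np)"

text \<open>Best responses in restriction G (pure beliefs): BR_G for players 1 and 2.\<close>
definition BR1 :: "restr \<Rightarrow> int \<Rightarrow> int set" where
  "BR1 G \<mu> = {s \<in> Np. \<forall>s' \<in> fst G. p1 s \<mu> \<ge> p1 s' \<mu>}"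

definition BR2 :: "restr \<Rightarrow> int \<Rightarrow> int set" where
  "BR2 G \<mu> = {s \<in> Np. \<forall>s' \<in> snd G. p2 \<mu> s \<ge> p2 \<mu> s'}"

definition GR :: "restr \<Rightarrow> restr" where
  "GR G = ({s \<in> Np. \<exists>\<mu> \<in> snd G. s \<in> BR1 H \<mu>}, {s \<in> Np. \<exists>\<mu> \<in> fst G. s \<in> BR2 H \<mu>})"

definition LR :: "restr \<Rightarrow> restr" where
  "LR G = ({s \<in> Np. \<exists>\<mu> \<in> snd G. s \<in> BR1 G \<mu>}, {s \<in> Np. \<exists>\<mu> \<in> fst G. s \<in> BR2 G \<mu>})"

definition bar :: "(restr \<Rightarrow> restr) \<Rightarrow> restr \<Rightarrow> restr" where
  "bar T G = (fst (T G) \<inter> fst G, snd (T G) \<inter> snd G)"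

definition iter :: "(restr \<Rightarrow> restr) \<Rightarrow> nat \<Rightarrow> restr" where
  "iter T n = (T ^^ n) H"

definition iter_omega :: "(restr \<Rightarrow> restr) \<Rightarrow> restr" where
  "iter_omega T = ((\<Inter>n. fst (iter T n)), (\<Inter>n. snd (iter T n)))"

end

theory Submission
  imports Defs
begin

text \<open>
  The iterates of both operators have the form \<open>N'\<^sub>m := {-1} \<union> {m, m+1, ...}\<close>.
  Against a belief \<open>l \<ge> 0\<close> player 1's best responses are \<open>-1\<close> and \<open>l + 1\<close>, and against
  \<open>k \<ge> 1\<close> player 2's are \<open>-1\<close> and \<open>k\<close>; against the belief \<open>-1\<close> there is no best response,
  because the payoff of \<open>s \<noteq> -1\<close> against \<open>-1\<close> is \<open>s\<close> itself, unbounded on \<open>N'\<^sub>m\<close>. Hence the pair of indices evolves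
  as \<open>(a, b) \<mapsto> (max a (b+1), max a b)\<close>, i.e. the \<open>n\<close>-th iterate is
  \<open>(N'\<^bsub>\<lceil>n/2\<rceil>\<^esub>, N'\<^bsub>\<lfloor>n/2\<rfloor>\<^esub>)\<close>, strictly decreasing with intersection \<open>({-1}, {-1})\<close>.
  There the two operators part ways: \<open>GR\<close> still compares against all of \<open>N'\<close>, where \<open>-1\<close> has
  no best response, while \<open>LR\<close> compares only within \<open>{-1}\<close>, where \<open>-1\<close> is trivially optimal.
\<close>

definition Np_from :: "nat \<Rightarrow> int set" where
  "Np_from m = insert (-1) {int m..}"

lemma neg_one_in_Np_from [simp]: "-1 \<in> Np_from m"
  by (simp add: Np_from_def)

lemma Np_from_0: "Np_from 0 = Np"
  by (auto simp: Np_from_def Np_def)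

lemma H_eq_Np_from: "H = (Np_from 0, Np_from 0)"
  by (simp add: H_def Np_from_0)

lemma Np_from_Int: "Np_from a \<inter> Np_from b = Np_from (max a b)"
  by (auto simp: Np_from_def)

lemma inj_Np_from: "inj Np_from"
proof (rule injI)
  fix a b assume eq: "Np_from a = Np_from b"
  have "int a \<in> Np_from a" "int b \<in> Np_from b"
    by (simp_all add: Np_from_def)
  then have "int a \<in> Np_from b" "int b \<in> Np_from a"
    by (simp_all add: eq)
  then have "int b \<le> int a" "int a \<le> int b"
    by (auto simp: Np_from_def)
  then show "a = b"
    by simp
qed

lemma Np_from_unbounded [simp]: "\<not> bdd_above (Np_from m)"
proof
  assume "bdd_above (Np_from m)"
  then obtain M where "\<forall>x \<in> Np_from m. x \<le> M"
    by (auto simp: bdd_above_def)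
  moreover have "max (M + 1) (int m) \<in> Np_from m"
    by (simp add: Np_from_def)
  ultimately show False
    by fastforce
qed

lemma INT_Np_from:
  fixes f :: "nat \<Rightarrow> nat"
  assumes "\<And>m. \<exists>n. m < f n"
  shows "(\<Inter>n. Np_from (f n)) = {-1}"
proof -
  have "k = -1" if k: "\<forall>n. k \<in> Np_from (f n)" for k
  proof (rule ccontr)
    assume "k \<noteq> -1"
    with k have "int (f n) \<le> k" for n
      by (auto simp: Np_from_def)
    then have "f n \<le> nat k" for n
      by (metis nat_int nat_mono)
    moreover obtain n where "nat k < f n"
      using assms by blast
    ultimately show False
      using leD by blast
  qed
  then show ?thesis
    by auto
qed

lemma BR1_neg_one:
  assumes "\<not> bdd_above (fst G)"
  shows "BR1 G (-1) = {}"
proof (rule ccontr)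
  assume "BR1 G (-1) \<noteq> {}"
  then obtain s where best: "\<forall>s' \<in> fst G. p1 s' (-1) \<le> p1 s (-1)"
    by (auto simp: BR1_def)
  have "s' \<le> max 0 (p1 s (-1))" if "s' \<in> fst G" for s'
    using best that by (cases "s' = -1") (auto simp: p1_def)
  then have "bdd_above (fst G)"
    by (rule bdd_aboveI)
  with assms show False ..
qed

lemma BR1_nonneg:
  assumes "0 \<le> l" and "-1 \<in> fst G"
  shows "BR1 G l = {-1, l + 1}"
proof -
  have payoff: "p1 s l = (if s = -1 \<or> s = l + 1 then l + 1 else 0)" for s
    using assms(1) by (simp add: p1_def)
  have "p1 s' l \<le> p1 s l" if "s = -1 \<or> s = l + 1" for s s'
    using that assms(1) by (simp add: payoff)
  moreover have "s = -1 \<or> s = l + 1" if "p1 (-1) l \<le> p1 s l" for s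
    using that assms(1) by (auto simp: payoff split: if_splits)
  ultimately show ?thesis
    using assms by (auto simp: BR1_def Np_def)
qed

lemma BR2_neg_one:
  assumes "\<not> bdd_above (snd G)"
  shows "BR2 G (-1) = {}"
proof (rule ccontr)
  assume "BR2 G (-1) \<noteq> {}"
  then obtain s where best: "\<forall>s' \<in> snd G. p2 (-1) s' \<le> p2 (-1) s"
    by (auto simp: BR2_def)
  have "s' \<le> max 0 (p2 (-1) s)" if "s' \<in> snd G" for s'
    using best that by (cases "s' = -1") (auto simp: p2_def)
  then have "bdd_above (snd G)"
    by (rule bdd_aboveI)
  with assms show False ..
qed

lemma BR2_pos:
  assumes "0 < k" and "-1 \<in> snd G"
  shows "BR2 G k = {-1, k}"
proof -
  have payoff: "p2 k s = (if s = -1 \<or> s = k then k else 0)" for s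
    using assms(1) by (simp add: p2_def)
  have "p2 k s' \<le> p2 k s" if "s = -1 \<or> s = k" for s s'
    using that assms(1) by (simp add: payoff)
  moreover have "s = -1 \<or> s = k" if "p2 k (-1) \<le> p2 k s" for s
    using that assms(1) by (auto simp: payoff split: if_splits)
  ultimately show ?thesis
    using assms by (auto simp: BR2_def Np_def)
qed

lemma BR2_zero: "BR2 G 0 = Np"
  by (auto simp: BR2_def p2_def)

lemma BR1_responses_Np_from:
  assumes "-1 \<in> fst G" and "\<not> bdd_above (fst G)"
  shows "{s \<in> Np. \<exists>\<mu> \<in> Np_from b. s \<in> BR1 G \<mu>} = Np_from (b + 1)"
proof -
  have "{s \<in> Np. \<exists>\<mu> \<in> Np_from b. s \<in> BR1 G \<mu>} = {s \<in> Np. \<exists>\<mu> \<ge> int b. s = -1 \<or> s = \<mu> + 1}"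
    using assms by (auto simp: Np_from_def BR1_neg_one BR1_nonneg)
  also have "\<dots> = Np_from (b + 1)"
    by (auto simp: Np_from_def Np_def) presburger
  finally show ?thesis .
qed

lemma BR2_responses_Np_from:
  assumes "-1 \<in> snd G" and "\<not> bdd_above (snd G)"
  shows "{s \<in> Np. \<exists>\<mu> \<in> Np_from a. s \<in> BR2 G \<mu>} = Np_from a"
proof (cases "a = 0")
  case True
  have "0 \<in> Np" and "BR2 G 0 = Np"
    by (simp_all add: Np_def BR2_zero)
  with True show ?thesis
    by (auto simp: Np_from_0)
next
  case False
  then have "{s \<in> Np. \<exists>\<mu> \<in> Np_from a. s \<in> BR2 G \<mu>} = {s \<in> Np. \<exists>\<mu> \<ge> int a. s = -1 \<or> s = \<mu>}"
    using assms by (auto simp: Np_from_def BR2_neg_one BR2_pos)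
  also have "\<dots> = Np_from a"
    by (auto simp: Np_from_def Np_def)
  finally show ?thesis .
qed

lemma GR_Np_from: "GR (Np_from a, Np_from b) = (Np_from (b + 1), Np_from a)"
  by (simp add: GR_def H_eq_Np_from BR1_responses_Np_from BR2_responses_Np_from)

lemma LR_Np_from: "LR (Np_from a, Np_from b) = (Np_from (b + 1), Np_from a)"
  by (simp add: LR_def BR1_responses_Np_from BR2_responses_Np_from)

lemma iter_Suc: "iter T (Suc n) = T (iter T n)"
  by (simp add: iter_def)

locale Np_from_shift =
  fixes T :: "restr \<Rightarrow> restr"
  assumes T_Np_from: "\<And>a b. T (Np_from a, Np_from b) = (Np_from (b + 1), Np_from a)"
begin

lemma bar_Np_from: "bar T (Np_from a, Np_from b) = (Np_from (max a (b + 1)), Np_from (max a b))"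
  by (simp add: bar_def T_Np_from Np_from_Int max.commute)

lemma iter_bar: "iter (bar T) n = (Np_from ((n + 1) div 2), Np_from (n div 2))"
proof (induction n)
  case 0
  then show ?case
    by (simp add: iter_def H_eq_Np_from)
next
  case (Suc n)
  have "max ((n + 1) div 2) (n div 2 + 1) = (Suc n + 1) div 2"
       "max ((n + 1) div 2) (n div 2) = Suc n div 2"
    by auto
  with Suc show ?case
    by (simp add: iter_Suc bar_Np_from)
qed

lemma iter_bar_strict: "iter (bar T) (Suc n) \<noteq> iter (bar T) n"
proof
  assume "iter (bar T) (Suc n) = iter (bar T) n"
  then have "Np_from ((n + 2) div 2) = Np_from ((n + 1) div 2)"
            "Np_from ((n + 1) div 2) = Np_from (n div 2)"
    by (simp_all add: iter_bar)
  then have "(n + 2) div 2 = (n + 1) div 2" "(n + 1) div 2 = n div 2"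
    using inj_Np_from by (simp_all add: inj_eq)
  then show False
    by presburger
qed

lemma iter_omega_bar: "iter_omega (bar T) = ({-1}, {-1})"
proof -
  have "\<exists>n. m < (n + 1) div 2" "\<exists>n. m < n div 2" for m :: nat
    by (rule exI[of _ "2 * m + 2"], simp)+
  then show ?thesis
    by (simp add: iter_omega_def iter_bar INT_Np_from)
qed

end

interpretation GR: Np_from_shift GR
  by unfold_locales (rule GR_Np_from)

interpretation LR: Np_from_shift LR
  by unfold_locales (rule LR_Np_from)

lemma bar_GR_neg_one: "bar GR ({-1}, {-1}) = ({}, {})"
  by (simp add: bar_def GR_def H_eq_Np_from BR1_neg_one BR2_neg_one)

lemma bar_LR_neg_one: "bar LR ({-1}, {-1}) = ({-1}, {-1})"
proof -
  have "-1 \<in> BR1 ({-1}, {-1}) (-1)" "-1 \<in> BR2 ({-1}, {-1}) (-1)"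
    by (simp_all add: BR1_def BR2_def Np_def)
  then show ?thesis
    by (auto simp: bar_def LR_def Np_def)
qed

theorem mainTheorem13:
  shows "iter_omega (bar GR) = ({-1}, {-1})
       \<and> bar GR (iter_omega (bar GR)) = ({}, {})
       \<and> (\<forall>n. iter (bar GR) (Suc n) \<noteq> iter (bar GR) n)
       \<and> bar GR (iter_omega (bar GR)) \<noteq> iter_omega (bar GR)
       \<and> bar GR (bar GR (iter_omega (bar GR))) = bar GR (iter_omega (bar GR))
       \<and> iter_omega (bar LR) = ({-1}, {-1})
       \<and> bar LR (iter_omega (bar LR)) = iter_omega (bar LR)"
proof -
  have "bar GR ({}, {}) = ({}, {})"
    by (simp add: bar_def)
  then show ?thesis
    by (simp add: GR.iter_omega_bar GR.iter_bar_strict LR.iter_omega_bar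
        bar_GR_neg_one bar_LR_neg_one)
qed

end
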